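(* Let $k\ge2$ be fixed. Then $m_k(n)/\gamma_k(n)\to1$ as $n\to\infty$.
   Context: Let $G=\{g_1=e,\dots,g_k\}$ be a group of order $k$. A labeled graph on $G$ with $n$ edges has vertex set $G$ and $n$ directed edges labeled $1,\dots,n$, each an ordered pair of vertices (loops and multiple edges allowed). The degree of a vertex is the number of edges having it as initial or terminal point, a loop counted twice. $m_k(n)$ is the number of such graphs having an Eulerian path starting at $e$ in the underlying undirected graph (a walk ignoring orientations starting at $e$ and using each edge exactly once). A graph has an Eulerian pseudo-path from $e$ to $g_i$ if all vertices other than $e,g_i$ have even degree, $\deg e$ is even when $g_i=e$, and $\deg e,\deg g_i$ are odd when $g_i\neq e$ (no connectivity required); $\gamma_k(n)$ is the number of labeled graphs on $G$ with $n$ edges having an Eulerian pseudo-path from $e$ to some vertex of $G$. *)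

theory Defs
  imports "HOL-Algebra.Group" "HOL-Library.FuncSet" Complex_Main
begin

text \<open>A labeled graph on vertex set V with n edges: a map from the edge labels
  {1..n} to ordered pairs of vertices (initial point, terminal point).
  Loops and multiple edges are allowed.\<close>

definition labeled_graphs :: "'a set \<Rightarrow> nat \<Rightarrow> (nat \<Rightarrow> 'a \<times> 'a) set" where
  "labeled_graphs V n = ({1..n} \<rightarrow>\<^sub>E V \<times> V)"

definition deg :: "(nat \<Rightarrow> 'a \<times> 'a) \<Rightarrow> nat \<Rightarrow> 'a \<Rightarrow> nat" where
  "deg E n v = card {i \<in> {1..n}. fst (E i) = v} + card {i \<in> {1..n}. snd (E i) = v}"

definition has_eulerian_path_from :: "(nat \<Rightarrow> 'a \<times> 'a) \<Rightarrow> nat \<Rightarrow> 'a \<Rightarrow> bool" where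
  "has_eulerian_path_from E n s \<longleftrightarrow>
     (\<exists>p vs. bij_betw p {..<n} {1..n} \<and> vs 0 = s \<and>
        (\<forall>j<n. E (p j) = (vs j, vs (Suc j)) \<or> E (p j) = (vs (Suc j), vs j)))"

definition has_eulerian_pseudo_path :: "'a set \<Rightarrow> (nat \<Rightarrow> 'a \<times> 'a) \<Rightarrow> nat \<Rightarrow> 'a \<Rightarrow> 'a \<Rightarrow> bool" where
  "has_eulerian_pseudo_path V E n s t \<longleftrightarrow>
     (\<forall>v\<in>V. v \<noteq> s \<and> v \<noteq> t \<longrightarrow> even (deg E n v)) \<and>
     (if t = s then even (deg E n s) else odd (deg E n s) \<and> odd (deg E n t))"

definition m_count :: "('a, 'b) monoid_scheme \<Rightarrow> nat \<Rightarrow> nat" where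
  "m_count G n = card {E \<in> labeled_graphs (carrier G) n. has_eulerian_path_from E n \<one>\<^bsub>G\<^esub>}"

definition gamma_count :: "('a, 'b) monoid_scheme \<Rightarrow> nat \<Rightarrow> nat" where
  "gamma_count G n = card {E \<in> labeled_graphs (carrier G) n.
      \<exists>g \<in> carrier G. has_eulerian_pseudo_path (carrier G) E n \<one>\<^bsub>G\<^esub> g}"

end

theory Submission
  imports Defs
begin

text \<open>If the underlying multigraph is connected, Euler's theorem turns an Eulerian pseudo-path
  from \<open>e\<close> into an Eulerian path, so \<open>\<gamma>\<^sub>k(n) - m\<^sub>k(n)\<close> only counts disconnected graphs. The edges
  of a disconnected graph lie in \<open>R \<times> R \<union> (G - R) \<times> (G - R)\<close> for a proper subset \<open>R \<ni> e\<close>,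
  a set of at most \<open>(k - 1)\<^sup>2 + 1\<close> pairs, so there are at most \<open>2\<^sup>k ((k - 1)\<^sup>2 + 1)\<^sup>n\<close> of them.
  On the other hand, every labeled graph with \<open>n - (k - 1)\<close> edges becomes one with all degrees
  even by adding \<open>k - 1\<close> edges at \<open>e\<close>, so \<open>\<gamma>\<^sub>k(n) \<ge> (k\<^sup>2)\<^bsup>n - k + 1\<^esup>\<close>. Since
  \<open>(k - 1)\<^sup>2 + 1 < k\<^sup>2\<close>, the ratio \<open>m\<^sub>k(n) / \<gamma>\<^sub>k(n)\<close> tends to 1 exponentially fast.\<close>

definition degree_on :: "(nat \<Rightarrow> 'a \<times> 'a) \<Rightarrow> nat set \<Rightarrow> 'a \<Rightarrow> nat" where
  "degree_on E J v = (\<Sum>i\<in>J. of_bool (fst (E i) = v) + of_bool (snd (E i) = v))"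

lemma deg_eq_degree_on: "deg E n v = degree_on E {1..n} v"
  unfolding deg_def degree_on_def by (simp add: sum.distrib Int_def conj_commute)

lemma sum_degree_on:
  assumes "finite J" "finite V" "E ` J \<subseteq> V \<times> V"
  shows "(\<Sum>v\<in>V. degree_on E J v) = 2 * card J"
proof -
  have "(\<Sum>v\<in>V. degree_on E J v) =
        (\<Sum>i\<in>J. \<Sum>v\<in>V. of_bool (fst (E i) = v) + of_bool (snd (E i) = v))"
    unfolding degree_on_def by (rule sum.swap)
  also have "\<dots> = (\<Sum>i\<in>J. 2)"
  proof (rule sum.cong)
    fix i assume "i \<in> J"
    then have "fst (E i) \<in> V" "snd (E i) \<in> V" using assms(3) by auto
    then show "(\<Sum>v\<in>V. of_bool (fst (E i) = v) + of_bool (snd (E i) = v)) = (2::nat)"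
      using assms(2) by (simp add: sum.distrib)
  qed simp
  finally show ?thesis by simp
qed

lemma even_degree_on_if_even_elsewhere:
  assumes "finite J" and even: "\<And>v. v \<noteq> t \<Longrightarrow> even (degree_on E J v)"
  shows "even (degree_on E J t)"
proof -
  define V where "V = insert t ((\<lambda>j. fst (E j)) ` J \<union> (\<lambda>j. snd (E j)) ` J)"
  have EV: "E ` J \<subseteq> V \<times> V"
  proof (rule image_subsetI)
    fix j assume "j \<in> J"
    then have "fst (E j) \<in> V" "snd (E j) \<in> V"
      unfolding V_def by simp_all
    then show "E j \<in> V \<times> V" by (simp add: mem_Times_iff)
  qed
  have "finite V" "t \<in> V" using assms(1) by (simp_all add: V_def)
  have "even (\<Sum>v\<in>V. degree_on E J v)"
    using sum_degree_on[OF assms(1) \<open>finite V\<close> EV] by simp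
  moreover have "(\<Sum>v\<in>V. degree_on E J v) = degree_on E J t + (\<Sum>v\<in>V - {t}. degree_on E J v)"
    by (rule sum.remove[OF \<open>finite V\<close> \<open>t \<in> V\<close>])
  moreover have "even (\<Sum>v\<in>V - {t}. degree_on E J v)"
    using even by (intro dvd_sum) auto
  ultimately show ?thesis by simp
qed

lemma degree_on_remove:
  "finite J \<Longrightarrow> i \<in> J \<Longrightarrow>
   degree_on E J v = degree_on E (J - {i}) v + of_bool (fst (E i) = v) + of_bool (snd (E i) = v)"
  unfolding degree_on_def by (simp add: sum.remove)

lemma degree_on_eq_0: "(\<And>i. i \<in> J \<Longrightarrow> fst (E i) \<noteq> v \<and> snd (E i) \<noteq> v) \<Longrightarrow> degree_on E J v = 0"
  unfolding degree_on_def by simp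

section \<open>Edge-closed vertex sets and connectivity\<close>

text \<open>Connectivity is phrased without walks: the edges \<open>J\<close> are connected from \<open>s\<close> if no vertex
  set containing \<open>s\<close> and closed under the edges of \<open>J\<close> misses an edge.\<close>

definition edge_closed :: "(nat \<Rightarrow> 'a \<times> 'a) \<Rightarrow> nat set \<Rightarrow> 'a set \<Rightarrow> bool" where
  "edge_closed E J R \<longleftrightarrow> (\<forall>j\<in>J. fst (E j) \<in> R \<longleftrightarrow> snd (E j) \<in> R)"

definition edge_connected_from :: "(nat \<Rightarrow> 'a \<times> 'a) \<Rightarrow> nat set \<Rightarrow> 'a \<Rightarrow> bool" where
  "edge_connected_from E J s \<longleftrightarrow> (\<forall>R. s \<in> R \<longrightarrow> edge_closed E J R \<longrightarrow> (\<forall>j\<in>J. fst (E j) \<in> R))"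

definition component :: "(nat \<Rightarrow> 'a \<times> 'a) \<Rightarrow> nat set \<Rightarrow> 'a \<Rightarrow> 'a set" where
  "component E J u = \<Inter>{R. u \<in> R \<and> edge_closed E J R}"

lemma edge_closed_Compl [simp]: "edge_closed E J (- R) \<longleftrightarrow> edge_closed E J R"
  unfolding edge_closed_def by auto

lemma edge_closed_component: "edge_closed E J (component E J u)"
  unfolding edge_closed_def component_def by blast

lemma mem_component: "u \<in> component E J u"
  unfolding component_def by blast

lemma component_subset: "u \<in> R \<Longrightarrow> edge_closed E J R \<Longrightarrow> component E J u \<subseteq> R"
  unfolding component_def by blast

lemma degree_on_edges_in_closed:
  assumes "finite J" "edge_closed E J R"
  shows "degree_on E {j\<in>J. fst (E j) \<in> R} v = (if v \<in> R then degree_on E J v else 0)"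
proof -
  have "degree_on E {j\<in>J. fst (E j) \<in> R} v =
        (\<Sum>j\<in>J. if fst (E j) \<in> R then of_bool (fst (E j) = v) + of_bool (snd (E j) = v) else 0)"
    unfolding degree_on_def by (simp add: sum.inter_filter[OF assms(1)])
  also have "\<dots> = (if v \<in> R then degree_on E J v else 0)"
    unfolding degree_on_def using assms(2) unfolding edge_closed_def
    by (auto intro!: sum.cong sum.neutral)
  finally show ?thesis .
qed

lemma edge_connected_component_edges:
  "edge_connected_from E {j\<in>J. fst (E j) \<in> component E J u} u"
  unfolding edge_connected_from_def
proof (intro allI impI ballI)
  fix R j
  let ?C = "component E J u"
  assume "u \<in> R" and closed: "edge_closed E {j\<in>J. fst (E j) \<in> ?C} R"
    and j: "j \<in> {j\<in>J. fst (E j) \<in> ?C}"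
  have "edge_closed E J (R \<inter> ?C)"
    unfolding edge_closed_def
  proof
    fix l assume "l \<in> J"
    then have C: "fst (E l) \<in> ?C \<longleftrightarrow> snd (E l) \<in> ?C"
      using edge_closed_component[of E J u] unfolding edge_closed_def by blast
    show "fst (E l) \<in> R \<inter> ?C \<longleftrightarrow> snd (E l) \<in> R \<inter> ?C"
    proof (cases "fst (E l) \<in> ?C")
      case True
      then have "fst (E l) \<in> R \<longleftrightarrow> snd (E l) \<in> R"
        using closed \<open>l \<in> J\<close> unfolding edge_closed_def by blast
      then show ?thesis using C by blast
    qed (use C in blast)
  qed
  then have "?C \<subseteq> R \<inter> ?C"
    using \<open>u \<in> R\<close> mem_component by (intro component_subset) auto
  then show "fst (E j) \<in> R" using j by blast
qed

lemma edge_connected_outside_closed: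
  assumes conn: "edge_connected_from E J s" and i: "i \<in> J" "E i = (s, u) \<or> E i = (u, s)"
    and closed: "edge_closed E (J - {i}) R" and "u \<in> R"
  shows "edge_connected_from E {j\<in>J - {i}. fst (E j) \<notin> R} s"
  unfolding edge_connected_from_def
proof (intro allI impI ballI)
  fix R' j
  assume "s \<in> R'" and closed': "edge_closed E {j\<in>J - {i}. fst (E j) \<notin> R} R'"
    and j: "j \<in> {j\<in>J - {i}. fst (E j) \<notin> R}"
  have "edge_closed E J (R' \<union> R)"
    unfolding edge_closed_def
  proof
    fix l assume "l \<in> J"
    show "fst (E l) \<in> R' \<union> R \<longleftrightarrow> snd (E l) \<in> R' \<union> R"
    proof (cases "l = i")
      case True
      then show ?thesis using i(2) \<open>s \<in> R'\<close> \<open>u \<in> R\<close> by auto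
    next
      case False
      then have "fst (E l) \<in> R \<longleftrightarrow> snd (E l) \<in> R"
        using closed \<open>l \<in> J\<close> unfolding edge_closed_def by blast
      moreover have "fst (E l) \<notin> R \<Longrightarrow> (fst (E l) \<in> R' \<longleftrightarrow> snd (E l) \<in> R')"
        using closed' \<open>l \<in> J\<close> False unfolding edge_closed_def by blast
      ultimately show ?thesis by blast
    qed
  qed
  then have "fst (E j) \<in> R' \<union> R"
    using conn \<open>s \<in> R'\<close> j unfolding edge_connected_from_def by blast
  then show "fst (E j) \<in> R'" using j by blast
qed

lemma edge_at_start:
  assumes "edge_connected_from E J s" "J \<noteq> {}"
  obtains i u where "i \<in> J" "E i = (s, u) \<or> E i = (u, s)"
proof (cases "edge_closed E J {s}")
  case True
  with assms obtain j where "j \<in> J" "fst (E j) = s"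
    unfolding edge_connected_from_def by blast
  then show ?thesis using that[of j "snd (E j)"] by (cases "E j") auto
next
  case False
  then obtain j where "j \<in> J" "fst (E j) = s \<or> snd (E j) = s"
    unfolding edge_closed_def by auto
  then show ?thesis
    using that[of j "if fst (E j) = s then snd (E j) else fst (E j)"] by (cases "E j") auto
qed

section \<open>Euler's theorem\<close>

text \<open>For \<open>s = t\<close> the condition says that all degrees are even.\<close>

definition pseudo_path_on :: "(nat \<Rightarrow> 'a \<times> 'a) \<Rightarrow> nat set \<Rightarrow> 'a \<Rightarrow> 'a \<Rightarrow> bool" where
  "pseudo_path_on E J s t \<longleftrightarrow> (\<forall>v. odd (degree_on E J v) \<longleftrightarrow> (v = s) \<noteq> (v = t))"

lemma pseudo_path_on_remove_edge:
  assumes "pseudo_path_on E J s t" "finite J" "i \<in> J" "E i = (s, u) \<or> E i = (u, s)"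
  shows "pseudo_path_on E (J - {i}) u t"
  unfolding pseudo_path_on_def
proof
  fix v
  have "(of_bool (fst (E i) = v) + of_bool (snd (E i) = v) :: nat) = of_bool (s = v) + of_bool (u = v)"
    using assms(4) by (elim disjE) auto
  then have deg: "degree_on E J v = degree_on E (J - {i}) v + of_bool (s = v) + of_bool (u = v)"
    using degree_on_remove[OF assms(2,3), of E v] by simp
  have "odd (degree_on E J v) \<longleftrightarrow> (v = s) \<noteq> (v = t)"
    using assms(1) unfolding pseudo_path_on_def by blast
  with deg show "odd (degree_on E (J - {i}) v) \<longleftrightarrow> (v = u) \<noteq> (v = t)"
    by (cases "v = s"; cases "v = u") auto
qed

inductive trail :: "(nat \<Rightarrow> 'a \<times> 'a) \<Rightarrow> 'a \<Rightarrow> nat list \<Rightarrow> 'a \<Rightarrow> bool" for E where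
  nil: "trail E s [] s"
| cons: "E i = (s, u) \<or> E i = (u, s) \<Longrightarrow> trail E u xs t \<Longrightarrow> trail E s (i # xs) t"

lemma trail_append: "trail E s xs u \<Longrightarrow> trail E u ys t \<Longrightarrow> trail E s (xs @ ys) t"
  by (induction rule: trail.induct) (auto intro: trail.intros)

lemma pseudo_path_on_split_closed:
  assumes "finite J" "pseudo_path_on E J u t" "edge_closed E J R" "u \<in> R"
  shows "pseudo_path_on E {j\<in>J. fst (E j) \<in> R} u t"
    and "even (degree_on E {j\<in>J. fst (E j) \<notin> R} v)"
proof -
  let ?D = "{j\<in>J. fst (E j) \<notin> R}"
  have odd_J: "odd (degree_on E J v) \<longleftrightarrow> (v = u) \<noteq> (v = t)" for v
    using assms(2) unfolding pseudo_path_on_def by blast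
  have degD: "degree_on E ?D v = (if v \<in> R then 0 else degree_on E J v)" for v
    using degree_on_edges_in_closed[of J E "- R" v] assms(1,3) by simp
  have "even (degree_on E ?D w)" if "w \<noteq> t" for w
    using degD[of w] odd_J[of w] assms(4) that by (cases "w \<in> R") auto
  moreover have "finite ?D" using assms(1) by simp
  ultimately show evenD: "even (degree_on E ?D v)" for v
    using even_degree_on_if_even_elsewhere[of ?D t E] by (cases "v = t") auto
  have "t \<in> R"
    using evenD[of t] degD[of t] odd_J[of t] assms(4) by (cases "t \<in> R") auto
  then show "pseudo_path_on E {j\<in>J. fst (E j) \<in> R} u t"
    unfolding pseudo_path_on_def
    using degree_on_edges_in_closed[OF assms(1,3)] odd_J assms(4) by auto
qed

text \<open>Remove an edge from \<open>s\<close> to \<open>u\<close>. The remaining edges in the component of \<open>u\<close> carry a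
  trail from \<open>u\<close> to \<open>t\<close>; the others have even degrees and form a closed trail at \<open>s\<close>,
  which is put in front.\<close>

lemma euler_trail:
  assumes "finite J" "pseudo_path_on E J s t" "edge_connected_from E J s"
  shows "\<exists>xs. trail E s xs t \<and> distinct xs \<and> set xs = J"
  using assms
proof (induction "card J" arbitrary: J s t rule: less_induct)
  case less
  show ?case
  proof (cases "J = {}")
    case True
    then have "s = t" using less.prems(2) unfolding pseudo_path_on_def degree_on_def by auto
    then show ?thesis using True by (auto intro: trail.intros)
  next
    case False
    obtain i u where i: "i \<in> J" "E i = (s, u) \<or> E i = (u, s)"
      using edge_at_start[OF less.prems(3) False] .
    define J' where "J' = J - {i}"
    define R where "R = component E J' u"
    define C where "C = {j\<in>J'. fst (E j) \<in> R}"
    define D where "D = {j\<in>J'. fst (E j) \<notin> R}"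
    have "finite J'" using less.prems(1) by (simp add: J'_def)
    have "u \<in> R" "edge_closed E J' R"
      unfolding R_def by (rule mem_component, rule edge_closed_component)
    have pp': "pseudo_path_on E J' u t"
      unfolding J'_def using pseudo_path_on_remove_edge[OF less.prems(2,1) i] .
    have ppC: "pseudo_path_on E C u t" and ppD: "pseudo_path_on E D s s"
      using pseudo_path_on_split_closed[OF \<open>finite J'\<close> pp' \<open>edge_closed E J' R\<close> \<open>u \<in> R\<close>]
      unfolding pseudo_path_on_def C_def D_def by simp_all
    have connC: "edge_connected_from E C u"
      unfolding C_def R_def by (rule edge_connected_component_edges)
    have connD: "edge_connected_from E D s"
      unfolding D_def J'_def
      using edge_connected_outside_closed[OF less.prems(3) i] \<open>edge_closed E J' R\<close> \<open>u \<in> R\<close>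
      by (simp add: J'_def)
    have "C \<subset> J" "D \<subset> J" using i by (auto simp: C_def D_def J'_def)
    then have "card C < card J" "card D < card J"
      using less.prems(1) by (simp_all add: psubset_card_mono)
    moreover have "finite C" "finite D" using \<open>finite J'\<close> by (simp_all add: C_def D_def)
    ultimately obtain xc xd where
      xc: "trail E u xc t" "distinct xc" "set xc = C" and
      xd: "trail E s xd s" "distinct xd" "set xd = D"
      using less.hyps ppC ppD connC connD by meson
    have "trail E s (xd @ i # xc) t"
      using trail_append[OF xd(1) trail.cons[OF i(2) xc(1)]] .
    moreover have "distinct (xd @ i # xc)" "set (xd @ i # xc) = J"
      using xc xd i by (auto simp: C_def D_def J'_def)
    ultimately show ?thesis by blast
  qed
qed

lemma has_eulerian_path_from_trail:
  assumes "trail E s xs t" "distinct xs" "set xs = {1..n}"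
  shows "has_eulerian_path_from E n s"
proof -
  have "\<exists>vs. vs 0 = s \<and> (\<forall>j<length xs. E (xs!j) = (vs j, vs (Suc j)) \<or> E (xs!j) = (vs (Suc j), vs j))"
    using assms(1)
  proof (induction rule: trail.induct)
    case (nil s)
    show ?case by auto
  next
    case (cons i s u xs t)
    then obtain vs where "vs 0 = u"
      "\<forall>j<length xs. E (xs!j) = (vs j, vs (Suc j)) \<or> E (xs!j) = (vs (Suc j), vs j)" by blast
    moreover have "E ((i # xs) ! j) = (case_nat s vs j, case_nat s vs (Suc j)) \<or>
        E ((i # xs) ! j) = (case_nat s vs (Suc j), case_nat s vs j)" if "j < length (i # xs)" for j
      using calculation cons.hyps(1) that by (cases j) simp_all
    ultimately show ?case by (intro exI[of _ "case_nat s vs"]) simp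
  qed
  moreover have "length xs = n" using distinct_card[OF assms(2)] assms(3) by simp
  moreover have "bij_betw ((!) xs) {..<length xs} {1..n}"
    using bij_betw_nth[OF assms(2)] assms(3) by simp
  ultimately show ?thesis unfolding has_eulerian_path_from_def by blast
qed

lemma odd_walk_degree:
  "odd (\<Sum>j<n. of_bool (vs j = v) + of_bool (vs (Suc j) = v) :: nat) \<longleftrightarrow> (vs 0 = v) \<noteq> (vs n = v)"
  by (induction n) auto

lemma pseudo_path_on_eulerian_path:
  assumes "has_eulerian_path_from E n s"
  obtains t where "pseudo_path_on E {1..n} s t"
proof -
  obtain p vs where p: "bij_betw p {..<n} {1..n}" and "vs 0 = s"
    and walk: "\<forall>j<n. E (p j) = (vs j, vs (Suc j)) \<or> E (p j) = (vs (Suc j), vs j)"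
    using assms unfolding has_eulerian_path_from_def by blast
  have deg: "degree_on E {1..n} v = (\<Sum>j<n. of_bool (vs j = v) + of_bool (vs (Suc j) = v))" for v
  proof -
    have "degree_on E {1..n} v = (\<Sum>j<n. of_bool (fst (E (p j)) = v) + of_bool (snd (E (p j)) = v))"
      unfolding degree_on_def by (rule sum.reindex_bij_betw[OF p, symmetric])
    also have "\<dots> = (\<Sum>j<n. of_bool (vs j = v) + of_bool (vs (Suc j) = v))"
    proof (rule sum.cong)
      fix j assume "j \<in> {..<n}"
      then have "E (p j) = (vs j, vs (Suc j)) \<or> E (p j) = (vs (Suc j), vs j)" using walk by blast
      then show "(of_bool (fst (E (p j)) = v) + of_bool (snd (E (p j)) = v) :: nat) =
          of_bool (vs j = v) + of_bool (vs (Suc j) = v)" by (elim disjE) auto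
    qed simp
    finally show ?thesis .
  qed
  then have "pseudo_path_on E {1..n} s (vs n)"
    unfolding pseudo_path_on_def deg odd_walk_degree \<open>vs 0 = s\<close> by auto
  then show ?thesis by (rule that)
qed

lemma labeled_graph_edge: "E \<in> labeled_graphs V n \<Longrightarrow> i \<in> {1..n} \<Longrightarrow> fst (E i) \<in> V \<and> snd (E i) \<in> V"
  unfolding labeled_graphs_def by (auto simp: PiE_iff mem_Times_iff)

lemma finite_labeled_graphs: "finite V \<Longrightarrow> finite (labeled_graphs V n)"
  unfolding labeled_graphs_def by (simp add: finite_PiE)

lemma card_labeled_graphs: "card (labeled_graphs V n) = (card V * card V) ^ n"
  unfolding labeled_graphs_def by (simp add: card_PiE card_cartesian_product)

lemma degree_on_labeled_graph_outside:
  "E \<in> labeled_graphs V n \<Longrightarrow> v \<notin> V \<Longrightarrow> degree_on E {1..n} v = 0"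
  by (rule degree_on_eq_0) (auto dest: labeled_graph_edge)

lemma has_eulerian_pseudo_path_iff:
  assumes "E \<in> labeled_graphs V n" "s \<in> V" "t \<in> V"
  shows "has_eulerian_pseudo_path V E n s t \<longleftrightarrow> pseudo_path_on E {1..n} s t"
proof
  assume "pseudo_path_on E {1..n} s t"
  then show "has_eulerian_pseudo_path V E n s t"
    unfolding pseudo_path_on_def has_eulerian_pseudo_path_def deg_eq_degree_on by auto
next
  assume "has_eulerian_pseudo_path V E n s t"
  then have inner: "\<forall>v\<in>V. v \<noteq> s \<and> v \<noteq> t \<longrightarrow> even (degree_on E {1..n} v)"
    and ends: "if t = s then even (degree_on E {1..n} s)
      else odd (degree_on E {1..n} s) \<and> odd (degree_on E {1..n} t)"
    unfolding has_eulerian_pseudo_path_def deg_eq_degree_on by blast+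
  show "pseudo_path_on E {1..n} s t"
    unfolding pseudo_path_on_def
  proof
    fix v
    show "odd (degree_on E {1..n} v) \<longleftrightarrow> (v = s) \<noteq> (v = t)"
    proof (cases "v \<in> V")
      case True
      then show ?thesis
        using inner ends by (cases "t = s"; cases "v = s"; cases "v = t") simp_all
    next
      case False
      then show ?thesis using degree_on_labeled_graph_outside[OF assms(1)] assms(2,3) by auto
    qed
  qed
qed

lemma pseudo_path_on_end_in_vertices:
  assumes "E \<in> labeled_graphs V n" "s \<in> V" "pseudo_path_on E {1..n} s t"
  shows "t \<in> V"
proof (rule ccontr)
  assume "t \<notin> V"
  then have "degree_on E {1..n} t = 0" by (rule degree_on_labeled_graph_outside[OF assms(1)])
  then show False using assms(3) \<open>t \<notin> V\<close> \<open>s \<in> V\<close> unfolding pseudo_path_on_def by force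
qed

lemma eulerian_path_imp_pseudo_path:
  assumes "E \<in> labeled_graphs V n" "s \<in> V" "has_eulerian_path_from E n s"
  shows "\<exists>t\<in>V. has_eulerian_pseudo_path V E n s t"
proof -
  obtain t where "pseudo_path_on E {1..n} s t"
    using pseudo_path_on_eulerian_path[OF assms(3)] .
  moreover have "t \<in> V" using pseudo_path_on_end_in_vertices[OF assms(1,2) calculation] .
  ultimately show ?thesis using has_eulerian_pseudo_path_iff[OF assms(1,2)] by auto
qed

lemma connected_pseudo_path_imp_eulerian_path:
  assumes "E \<in> labeled_graphs V n" "s \<in> V" "t \<in> V" "has_eulerian_pseudo_path V E n s t"
    and "edge_connected_from E {1..n} s"
  shows "has_eulerian_path_from E n s"
proof -
  have "pseudo_path_on E {1..n} s t" using assms(4) has_eulerian_pseudo_path_iff[OF assms(1-3)] by simp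
  then obtain xs where "trail E s xs t" "distinct xs" "set xs = {1..n}"
    using euler_trail[OF _ _ assms(5)] by blast
  then show ?thesis by (rule has_eulerian_path_from_trail)
qed

section \<open>Counting\<close>

lemma not_edge_connected_imp_block_diagonal:
  assumes "E \<in> labeled_graphs V n" "s \<in> V" "\<not> edge_connected_from E {1..n} s"
  obtains R where "R \<subseteq> V" "s \<in> R" "R \<noteq> V" "E \<in> {1..n} \<rightarrow>\<^sub>E R \<times> R \<union> (V - R) \<times> (V - R)"
proof -
  obtain R j where R: "s \<in> R" "edge_closed E {1..n} R" and j: "j \<in> {1..n}" "fst (E j) \<notin> R"
    using assms(3) unfolding edge_connected_from_def by blast
  have "fst (E j) \<in> V" using labeled_graph_edge[OF assms(1) j(1)] by blast
  then have "R \<inter> V \<noteq> V" using j(2) by blast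
  moreover have "E \<in> {1..n} \<rightarrow>\<^sub>E (R \<inter> V) \<times> (R \<inter> V) \<union> (V - R \<inter> V) \<times> (V - R \<inter> V)"
  proof -
    have "E i \<in> (R \<inter> V) \<times> (R \<inter> V) \<union> (V - R \<inter> V) \<times> (V - R \<inter> V)" if "i \<in> {1..n}" for i
    proof -
      have "fst (E i) \<in> R \<longleftrightarrow> snd (E i) \<in> R" using R(2) that unfolding edge_closed_def by blast
      then show ?thesis using labeled_graph_edge[OF assms(1) that] by (cases "E i") auto
    qed
    then show ?thesis using assms(1) unfolding labeled_graphs_def by (auto simp: PiE_iff)
  qed
  ultimately show ?thesis using that[of "R \<inter> V"] assms(2) R(1) by blast
qed

lemma card_block_diagonal_le:
  assumes "finite V" "R \<subseteq> V" "R \<noteq> {}" "R \<noteq> V"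
  shows "card (R \<times> R \<union> (V - R) \<times> (V - R)) \<le> (card V - 1)\<^sup>2 + 1"
proof -
  have "finite R" using assms(1,2) by (rule finite_subset[rotated])
  have "card R \<noteq> 0" using \<open>finite R\<close> assms(3) by simp
  moreover have "card (V - R) \<noteq> 0" using assms(1,2,4) by auto
  ultimately obtain a b where a: "card R = Suc a" and b: "card (V - R) = Suc b"
    by (metis not0_implies_Suc)
  have "card V = card R + card (V - R)"
    using card_Diff_subset[OF \<open>finite R\<close> assms(2)] card_mono[OF assms(1,2)] by simp
  then have "card V - 1 = a + b + 1" using a b by simp
  moreover have "card (R \<times> R \<union> (V - R) \<times> (V - R)) = card R * card R + card (V - R) * card (V - R)"
    using \<open>finite R\<close> assms(1) by (subst card_Un_disjoint) (auto simp: card_cartesian_product)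
  ultimately show ?thesis unfolding a b by (simp add: power2_eq_square algebra_simps)
qed

lemma card_not_edge_connected_le:
  assumes "finite V" "s \<in> V"
  shows "card {E \<in> labeled_graphs V n. \<not> edge_connected_from E {1..n} s}
           \<le> 2 ^ card V * ((card V - 1)\<^sup>2 + 1) ^ n"
proof -
  define Rs where "Rs = {R. R \<subseteq> V \<and> s \<in> R \<and> R \<noteq> V}"
  define B where "B R = {1..n} \<rightarrow>\<^sub>E R \<times> R \<union> (V - R) \<times> (V - R)" for R
  have "finite Rs" using assms(1) unfolding Rs_def by (auto intro: finite_subset[of _ "Pow V"])
  have "card Rs \<le> card (Pow V)"
    using assms(1) by (intro card_mono) (auto simp: Rs_def)
  then have "card Rs \<le> 2 ^ card V" using card_Pow[OF assms(1)] by simp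
  have "card {E \<in> labeled_graphs V n. \<not> edge_connected_from E {1..n} s} \<le> card (\<Union>R\<in>Rs. B R)"
  proof (rule card_mono)
    have "B R \<subseteq> labeled_graphs V n" if "R \<in> Rs" for R
      using that unfolding B_def labeled_graphs_def Rs_def by (intro PiE_mono) auto
    then show "finite (\<Union>R\<in>Rs. B R)"
      using finite_labeled_graphs[OF assms(1)] by (blast intro: finite_subset)
    show "{E \<in> labeled_graphs V n. \<not> edge_connected_from E {1..n} s} \<subseteq> (\<Union>R\<in>Rs. B R)"
    proof
      fix E assume "E \<in> {E \<in> labeled_graphs V n. \<not> edge_connected_from E {1..n} s}"
      then obtain R where "R \<subseteq> V" "s \<in> R" "R \<noteq> V" "E \<in> B R"
        unfolding B_def using not_edge_connected_imp_block_diagonal[OF _ assms(2)] by blast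
      then show "E \<in> (\<Union>R\<in>Rs. B R)" unfolding Rs_def by blast
    qed
  qed
  also have "\<dots> \<le> (\<Sum>R\<in>Rs. card (B R))" by (rule card_UN_le[OF \<open>finite Rs\<close>])
  also have "\<dots> \<le> (\<Sum>R\<in>Rs. ((card V - 1)\<^sup>2 + 1) ^ n)"
  proof (rule sum_mono)
    fix R assume "R \<in> Rs"
    then have "card (R \<times> R \<union> (V - R) \<times> (V - R)) \<le> (card V - 1)\<^sup>2 + 1"
      using card_block_diagonal_le[OF assms(1)] unfolding Rs_def by blast
    then show "card (B R) \<le> ((card V - 1)\<^sup>2 + 1) ^ n"
      unfolding B_def card_PiE[OF finite_atLeastAtMost] prod_constant card_atLeastAtMost
      by (simp add: power_mono)
  qed
  also have "\<dots> \<le> 2 ^ card V * ((card V - 1)\<^sup>2 + 1) ^ n"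
    using \<open>card Rs \<le> 2 ^ card V\<close> by simp
  finally show ?thesis .
qed

definition fix_parities :: "'a \<Rightarrow> (nat \<Rightarrow> 'a) \<Rightarrow> nat set \<Rightarrow> nat set \<Rightarrow> (nat \<Rightarrow> 'a \<times> 'a) \<Rightarrow> nat \<Rightarrow> 'a \<times> 'a" where
  "fix_parities e w J I F i =
     (if i \<in> I then (e, if odd (degree_on F J (w i)) then w i else e) else F i)"

lemma even_degree_on_fix_parities:
  assumes "bij_betw w I (V - {e})" "finite V" "finite J" "finite I" "J \<inter> I = {}"
    and "v \<in> V" "v \<noteq> e"
  shows "even (degree_on (fix_parities e w J I F) (J \<union> I) v)"
proof -
  let ?F' = "fix_parities e w J I F"
  have "degree_on ?F' I v = (\<Sum>i\<in>I. if w i = v then of_bool (odd (degree_on F J (w i))) else 0)"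
    unfolding degree_on_def fix_parities_def using \<open>v \<noteq> e\<close> by (intro sum.cong) auto
  also have "\<dots> = (\<Sum>x\<in>V - {e}. if x = v then of_bool (odd (degree_on F J x)) else 0)"
    by (rule sum.reindex_bij_betw[OF assms(1)])
  also have "\<dots> = of_bool (odd (degree_on F J v))"
    using assms(2,6,7) by (simp add: sum.delta)
  finally have "degree_on ?F' I v = of_bool (odd (degree_on F J v))" .
  moreover have "degree_on ?F' J v = degree_on F J v"
    unfolding degree_on_def fix_parities_def using assms(5) by (intro sum.cong) auto
  moreover have "degree_on ?F' (J \<union> I) v = degree_on ?F' J v + degree_on ?F' I v"
    unfolding degree_on_def using assms(3-5) by (rule sum.union_disjoint)
  ultimately show ?thesis by simp
qed

lemma card_even_degree_graphs_ge:
  fixes N :: nat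
  assumes "finite V" "e \<in> V"
  defines "n \<equiv> N + (card V - 1)"
  shows "(card V * card V) ^ N \<le> card {E \<in> labeled_graphs V n. \<forall>v\<in>V. even (deg E n v)}"
proof -
  have "card {N+1..n} = card (V - {e})" using assms by (simp add: n_def)
  then obtain w where w: "bij_betw w {N+1..n} (V - {e})"
    using assms(1) finite_same_card_bij by blast
  define ext where "ext = fix_parities e w {1..N} {N+1..n}"
  have "{1..N} \<union> {N+1..n} = {1..n}" by (auto simp: n_def)
  then have even_off_e: "even (degree_on (ext F) {1..n} v)" if "v \<in> V" "v \<noteq> e" for F v
    using even_degree_on_fix_parities[OF w assms(1) _ _ _ that, where J = "{1..N}"]
    unfolding ext_def by simp
  have ext_labeled: "ext F \<in> labeled_graphs V n" if F: "F \<in> labeled_graphs V N" for F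
    unfolding labeled_graphs_def PiE_iff
  proof (intro conjI ballI)
    fix i assume "i \<in> {1..n}"
    then show "ext F i \<in> V \<times> V"
      using F bij_betwE[OF w] assms(2) unfolding labeled_graphs_def ext_def fix_parities_def
      by (cases "i \<in> {N+1..n}") (auto simp: PiE_iff)
  next
    show "ext F \<in> extensional {1..n}"
      using F unfolding labeled_graphs_def ext_def fix_parities_def extensional_def PiE_iff n_def
      by auto
  qed
  have "ext F \<in> {E \<in> labeled_graphs V n. \<forall>v\<in>V. even (deg E n v)}" if "F \<in> labeled_graphs V N" for F
  proof -
    have "even (degree_on (ext F) {1..n} v)" if "v \<noteq> e" for v
      using even_off_e that degree_on_labeled_graph_outside[OF ext_labeled[OF \<open>F \<in> _\<close>]]
      by (cases "v \<in> V") auto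
    moreover from this have "even (degree_on (ext F) {1..n} e)"
      by (rule even_degree_on_if_even_elsewhere[OF finite_atLeastAtMost])
    ultimately have "even (degree_on (ext F) {1..n} v)" for v by (cases "v = e") auto
    then show ?thesis using ext_labeled[OF that] by (simp add: deg_eq_degree_on)
  qed
  moreover have "inj_on ext (labeled_graphs V N)"
  proof
    fix F F' assume F: "F \<in> labeled_graphs V N" and F': "F' \<in> labeled_graphs V N" and "ext F = ext F'"
    have "F i = F' i" if "i \<in> {1..N}" for i
      using that fun_cong[OF \<open>ext F = ext F'\<close>, of i] by (simp add: ext_def fix_parities_def)
    then show "F = F'" using PiE_ext F F' unfolding labeled_graphs_def by metis
  qed
  moreover have "finite {E \<in> labeled_graphs V n. \<forall>v\<in>V. even (deg E n v)}"
    using finite_labeled_graphs[OF assms(1)] by simp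
  ultimately have "card (labeled_graphs V N) \<le> card {E \<in> labeled_graphs V n. \<forall>v\<in>V. even (deg E n v)}"
    by (intro card_inj_on_le) auto
  then show ?thesis by (simp add: card_labeled_graphs)
qed

lemma card_eulerian_le_card_pseudo:
  assumes "finite V" "s \<in> V"
  shows "card {E \<in> labeled_graphs V n. has_eulerian_path_from E n s}
    \<le> card {E \<in> labeled_graphs V n. \<exists>t\<in>V. has_eulerian_pseudo_path V E n s t}"
proof (rule card_mono)
  show "finite {E \<in> labeled_graphs V n. \<exists>t\<in>V. has_eulerian_pseudo_path V E n s t}"
    using finite_labeled_graphs[OF assms(1)] by simp
  show "{E \<in> labeled_graphs V n. has_eulerian_path_from E n s}
    \<subseteq> {E \<in> labeled_graphs V n. \<exists>t\<in>V. has_eulerian_pseudo_path V E n s t}"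
    using eulerian_path_imp_pseudo_path[OF _ assms(2)] by blast
qed

lemma card_pseudo_le_card_eulerian_add:
  assumes "finite V" "s \<in> V"
  shows "card {E \<in> labeled_graphs V n. \<exists>t\<in>V. has_eulerian_pseudo_path V E n s t}
    \<le> card {E \<in> labeled_graphs V n. has_eulerian_path_from E n s}
      + 2 ^ card V * ((card V - 1)\<^sup>2 + 1) ^ n"
proof -
  let ?A = "{E \<in> labeled_graphs V n. has_eulerian_path_from E n s}"
  let ?B = "{E \<in> labeled_graphs V n. \<not> edge_connected_from E {1..n} s}"
  have "{E \<in> labeled_graphs V n. \<exists>t\<in>V. has_eulerian_pseudo_path V E n s t} \<subseteq> ?A \<union> ?B"
  proof
    fix E assume "E \<in> {E \<in> labeled_graphs V n. \<exists>t\<in>V. has_eulerian_pseudo_path V E n s t}"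
    then obtain t where E: "E \<in> labeled_graphs V n" "t \<in> V" "has_eulerian_pseudo_path V E n s t"
      by blast
    show "E \<in> ?A \<union> ?B"
      using connected_pseudo_path_imp_eulerian_path[OF E(1) assms(2) E(2,3)] E(1) by blast
  qed
  moreover have "finite (?A \<union> ?B)" using finite_labeled_graphs[OF assms(1)] by simp
  ultimately have "card {E \<in> labeled_graphs V n. \<exists>t\<in>V. has_eulerian_pseudo_path V E n s t}
      \<le> card (?A \<union> ?B)"
    by (rule card_mono[rotated])
  also have "\<dots> \<le> card ?A + card ?B" by (rule card_Un_le)
  also have "\<dots> \<le> card ?A + 2 ^ card V * ((card V - 1)\<^sup>2 + 1) ^ n"
    using card_not_edge_connected_le[OF assms] by simp
  finally show ?thesis .
qed

lemma card_pseudo_ge: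
  assumes "finite V" "s \<in> V" "n \<ge> card V - 1"
  shows "(card V * card V) ^ n
    \<le> (card V * card V) ^ (card V - 1) * card {E \<in> labeled_graphs V n. \<exists>t\<in>V. has_eulerian_pseudo_path V E n s t}"
proof -
  let ?P = "{E \<in> labeled_graphs V n. \<exists>t\<in>V. has_eulerian_pseudo_path V E n s t}"
  have n: "n - (card V - 1) + (card V - 1) = n" using assms(3) by simp
  have "{E \<in> labeled_graphs V n. \<forall>v\<in>V. even (deg E n v)} \<subseteq> ?P"
  proof
    fix E assume "E \<in> {E \<in> labeled_graphs V n. \<forall>v\<in>V. even (deg E n v)}"
    then show "E \<in> ?P"
      using assms(2) by (auto intro!: bexI[of _ s] simp: has_eulerian_pseudo_path_def)
  qed
  then have "card {E \<in> labeled_graphs V n. \<forall>v\<in>V. even (deg E n v)} \<le> card ?P"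
    using finite_labeled_graphs[OF assms(1)] by (intro card_mono) simp_all
  then have "(card V * card V) ^ (n - (card V - 1)) \<le> card ?P"
    using card_even_degree_graphs_ge[OF assms(1,2), of "n - (card V - 1)"] unfolding n by simp
  then have "(card V * card V) ^ (card V - 1) * (card V * card V) ^ (n - (card V - 1))
    \<le> (card V * card V) ^ (card V - 1) * card ?P"
    by (rule mult_le_mono2)
  then show ?thesis
    unfolding power_add[symmetric] using n by (simp add: add.commute)
qed

lemma ratio_tendsto_one:
  fixes m g :: "nat \<Rightarrow> real"
  assumes nonneg: "\<And>n. 0 \<le> m n" and le: "\<And>n. m n \<le> g n"
    and upper: "\<And>n. g n \<le> m n + C * q ^ n" and lower: "\<And>n. n \<ge> N \<Longrightarrow> K ^ n \<le> D * g n"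
    and C: "0 \<le> C" and D: "0 < D" and q: "0 \<le> q" "q < K"
  shows "(\<lambda>n. m n / g n) \<longlonglongrightarrow> 1"
proof (rule tendsto_sandwich)
  have "K > 0" using q by simp
  have "(\<lambda>n. (q / K) ^ n) \<longlonglongrightarrow> 0"
    using q \<open>K > 0\<close> by (intro LIMSEQ_power_zero) simp
  then show "(\<lambda>n. 1 - C * D * (q / K) ^ n) \<longlonglongrightarrow> 1"
    using tendsto_diff[OF tendsto_const tendsto_mult_right_zero] by fastforce
  show "\<forall>\<^sub>F n in sequentially. 1 - C * D * (q / K) ^ n \<le> m n / g n"
  proof (rule eventually_sequentiallyI)
    fix n assume "n \<ge> N"
    then have Kg: "K ^ n \<le> D * g n" by (rule lower)
    moreover have "0 < K ^ n" using \<open>K > 0\<close> by simp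
    ultimately have "0 < D * g n" by linarith
    then have "g n > 0" using D by (simp add: zero_less_mult_iff)
    have "C * q ^ n / g n = C * q ^ n * D / (D * g n)" using D by simp
    also have "\<dots> \<le> C * q ^ n * D / K ^ n"
      using Kg \<open>K > 0\<close> C D q(1) by (intro frac_le) auto
    also have "\<dots> = C * D * (q / K) ^ n" by (simp add: power_divide)
    finally have "1 - C * D * (q / K) ^ n \<le> (g n - C * q ^ n) / g n"
      using \<open>g n > 0\<close> by (simp add: diff_divide_distrib)
    also have "\<dots> \<le> m n / g n"
      using upper[of n] \<open>g n > 0\<close> by (intro divide_right_mono) auto
    finally show "1 - C * D * (q / K) ^ n \<le> m n / g n" .
  qed
  show "\<forall>\<^sub>F n in sequentially. m n / g n \<le> 1"
  proof (intro always_eventually allI)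
    fix n
    show "m n / g n \<le> 1"
      using nonneg[of n] le[of n] by (cases "g n = 0") (simp_all add: divide_le_eq_1)
  qed
qed (rule tendsto_const)

theorem mainTheorem16:
  fixes G :: "('a, 'b) monoid_scheme" and k :: nat
  assumes "group G" and "finite (carrier G)" and "card (carrier G) = k" and "k \<ge> 2"
  shows "(\<lambda>n. real (m_count G n) / real (gamma_count G n)) \<longlonglongrightarrow> 1"
proof -
  have one: "\<one>\<^bsub>G\<^esub> \<in> carrier G" using assms(1) by (simp add: group.is_monoid monoid.one_closed)
  let ?q = "(k - 1)\<^sup>2 + 1"
  show ?thesis
  proof (rule ratio_tendsto_one[where C = "2 ^ k" and q = "real ?q"
        and K = "real (k * k)" and D = "real (k * k) ^ (k - 1)" and N = "k - 1"])
    fix n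
    show "real (m_count G n) \<le> real (gamma_count G n)"
      using card_eulerian_le_card_pseudo[OF assms(2) one] unfolding m_count_def gamma_count_def by simp
    show "real (gamma_count G n) \<le> real (m_count G n) + 2 ^ k * real ?q ^ n"
      using of_nat_mono[OF card_pseudo_le_card_eulerian_add[OF assms(2) one, of n]] assms(3)
      unfolding m_count_def gamma_count_def by simp
  next
    fix n assume "k - 1 \<le> n"
    then show "real (k * k) ^ n \<le> real (k * k) ^ (k - 1) * real (gamma_count G n)"
      using of_nat_mono[OF card_pseudo_ge[OF assms(2) one, of n]] assms(3)
      unfolding gamma_count_def by simp
  next
    have "?q < k * k" using assms(4) by (cases k) (auto simp: power2_eq_square)
    then show "real ?q < real (k * k)" by (simp only: of_nat_less_iff)
  qed (use assms(4) in simp_all)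
qed

end
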